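(* Suppose Assumption A holds with constant $d$, and that there is a constant $L^\circ\in[1,\infty)$ (depending on $\theta^\circ,\lambda,\eta$) such that $\sup_{0<\epsilon<1}\epsilon\,m^\circ_\epsilon\Lambda_{(m^\circ_\epsilon)}/\Phi^\circ_\epsilon\le L^\circ$. If moreover $m^\circ_\epsilon\to\infty$ as $\epsilon\to0$, then with $K^\circ:=10((1+d^{-1})\vee d^{-2}\|\theta^\circ-\eta\|^2)L^\circ$, $$\lim_{\epsilon\to0}\mathbb E_{\theta^\circ}P_{\vartheta^{m^\circ_\epsilon}|Y}\Big((K^\circ)^{-1}\Phi^\circ_\epsilon\le\|\vartheta^{m^\circ_\epsilon}-\theta^\circ\|^2\le K^\circ\Phi^\circ_\epsilon\Big)=1.$$
   Context: Let $\ell^2$ be the space of square-summable real sequences with norm $\|\cdot\|$. Fix a bounded real sequence $\lambda=(\lambda_j)_{j\ge1}$ with $\lambda_j\ne0$ for all $j$, a noise level $\epsilon\in(0,1)$ and a true parameter $\theta^\circ\in\ell^2$. The data $Y=(Y_j)_{j\ge1}$ satisfy $Y_j=\lambda_j\theta^\circ_j+\sqrt\epsilon\,\xi_j$ with $\xi_j$ i.i.d. $N(0,1)$; $\mathbb E_{\theta^\circ}$, $P_{\theta^\circ}$ denote expectation and probability under this law. Fix prior means $\eta=(\eta_j)_{j\ge1}$ with $\theta^\circ-\eta\in\ell^2$ and prior variances $\tau_j\in(0,\infty)$ (possibly depending on $\epsilon$). For $m\in\mathbb N$ the sieve prior $P_{\vartheta^m}$ is the law of $\vartheta^m=(\vartheta^m_j)_{j\ge1}$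 with independent coordinates, $\vartheta^m_j\sim N(\eta_j,\tau_j)$ for $j\le m$ and $\vartheta^m_j=\eta_j$ a.s. for $j>m$, in the model $Y_j=\lambda_j\vartheta^m_j+\sqrt\epsilon\xi_j$ with $\vartheta^m$ independent of $(\xi_j)$. Put $\sigma_j:=(\lambda_j^2\epsilon^{-1}+\tau_j^{-1})^{-1}$ and $\theta^Y_j:=\sigma_j(\tau_j^{-1}\eta_j+\lambda_j\epsilon^{-1}Y_j)$. The posterior $P_{\vartheta^m|Y}$ makes the coordinates independent with $\vartheta^m_j\sim N(\theta^Y_j,\sigma_j)$ for $j\le m$ and $\vartheta^m_j=\eta_j$ for $j>m$; the Bayes estimator is $\hat\theta^m:=\mathbb E[\vartheta^m|Y]$. Define $b_m:=\sum_{j>m}(\theta^\circ_j-\eta_j)^2$. Let $\Lambda_j:=\lambda_j^{-2}$, $\Lambda_{(m)}:=\max_{1\le j\le m}\Lambda_j$, $\bar\Lambda_m:=m^{-1}\sum_{j=1}^m\Lambda_j$ and $\Phi^m_\epsilon:=b_m\vee\epsilon m\bar\Lambda_m$. Let $G_\epsilon:=\max\{1\le m\le\lfloor\epsilon^{-1}\rfloor:\epsilon\Lambda_{(m)}\le\Lambda_1\}$. Assumption A: there is a constant $d>0$ such that $\tau_j\ge d\,(\epsilon^{1/2}\Lambda_j^{1/2}\vee\epsilon\Lambda_j)$ for all $1\le j\le G_\epsilon$ and all $\epsilon\in(0,1)$. Oracle quantities: $m^\circ_\epsilon:=\min\{m\ge1:\Phi^m_\epsilon\le\Phi^k_\epsilon\text{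 for all }k\ge1\}$ and $\Phi^\circ_\epsilon:=\Phi^{m^\circ_\epsilon}_\epsilon=\min_{m\ge1}\Phi^m_\epsilon$. *)

theory Defs
  imports "HOL-Probability.Probability"
begin

text \<open>Indexing convention: sequences are nat-indexed starting at 0; coordinate i
  corresponds to the paper's coordinate j = i + 1.\<close>

definition Lam :: "(nat \<Rightarrow> real) \<Rightarrow> nat \<Rightarrow> real" where
  "Lam lam i = 1 / (lam i)\<^sup>2"

definition LamMax :: "(nat \<Rightarrow> real) \<Rightarrow> nat \<Rightarrow> real" where
  "LamMax lam m = Max (Lam lam ` {..<m})"

definition LamBar :: "(nat \<Rightarrow> real) \<Rightarrow> nat \<Rightarrow> real" where
  "LamBar lam m = (\<Sum>i<m. Lam lam i) / real m"

definition sqnorm :: "(nat \<Rightarrow> real) \<Rightarrow> real" where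
  "sqnorm x = (\<Sum>i. (x i)\<^sup>2)"

text \<open>b_m = sum over paper-indices j > m, i.e. 0-based indices i >= m.\<close>
definition bias :: "(nat \<Rightarrow> real) \<Rightarrow> (nat \<Rightarrow> real) \<Rightarrow> nat \<Rightarrow> real" where
  "bias th eta m = (\<Sum>i. (th (i + m) - eta (i + m))\<^sup>2)"

definition Phi :: "(nat \<Rightarrow> real) \<Rightarrow> (nat \<Rightarrow> real) \<Rightarrow> (nat \<Rightarrow> real) \<Rightarrow> real \<Rightarrow> nat \<Rightarrow> real" where
  "Phi lam th eta eps m = max (bias th eta m) (eps * real m * LamBar lam m)"

definition oracle_dim :: "(nat \<Rightarrow> real) \<Rightarrow> (nat \<Rightarrow> real) \<Rightarrow> (nat \<Rightarrow> real) \<Rightarrow> real \<Rightarrow> nat" where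
  "oracle_dim lam th eta eps =
     (LEAST m. 1 \<le> m \<and> (\<forall>k\<ge>1. Phi lam th eta eps m \<le> Phi lam th eta eps k))"

definition oracle_rate :: "(nat \<Rightarrow> real) \<Rightarrow> (nat \<Rightarrow> real) \<Rightarrow> (nat \<Rightarrow> real) \<Rightarrow> real \<Rightarrow> real" where
  "oracle_rate lam th eta eps = Phi lam th eta eps (oracle_dim lam th eta eps)"

definition G_eps :: "(nat \<Rightarrow> real) \<Rightarrow> real \<Rightarrow> nat" where
  "G_eps lam eps = Max {m. 1 \<le> m \<and> m \<le> nat \<lfloor>1 / eps\<rfloor> \<and> eps * LamMax lam m \<le> Lam lam 0}"

definition post_var :: "(nat \<Rightarrow> real) \<Rightarrow> (nat \<Rightarrow> real) \<Rightarrow> real \<Rightarrow> nat \<Rightarrow> real" where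
  "post_var lam tau eps i = 1 / ((lam i)\<^sup>2 / eps + 1 / tau i)"

definition post_mean :: "(nat \<Rightarrow> real) \<Rightarrow> (nat \<Rightarrow> real) \<Rightarrow> (nat \<Rightarrow> real) \<Rightarrow> real \<Rightarrow> (nat \<Rightarrow> real) \<Rightarrow> nat \<Rightarrow> real" where
  "post_mean lam tau eta eps Y i = post_var lam tau eps i * (eta i / tau i + lam i * Y i / eps)"

text \<open>Posterior law of the sieve prior vartheta^m given data Y: independent coordinates,
  N(theta^Y_j, sigma_j) for paper-index j <= m (0-based i < m), and point mass at eta_j otherwise.\<close>
definition posterior :: "(nat \<Rightarrow> real) \<Rightarrow> (nat \<Rightarrow> real) \<Rightarrow> (nat \<Rightarrow> real) \<Rightarrow> real \<Rightarrow> nat \<Rightarrow> (nat \<Rightarrow> real) \<Rightarrow> (nat \<Rightarrow> real) measure" where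
  "posterior lam tau eta eps m Y =
     (\<Pi>\<^sub>M i\<in>UNIV. if i < m
        then density lborel (normal_density (post_mean lam tau eta eps Y i) (sqrt (post_var lam tau eps i)))
        else return borel (eta i))"

definition data_law :: "(nat \<Rightarrow> real) \<Rightarrow> (nat \<Rightarrow> real) \<Rightarrow> real \<Rightarrow> (nat \<Rightarrow> real) measure" where
  "data_law lam th eps = (\<Pi>\<^sub>M i\<in>UNIV. density lborel (normal_density (lam i * th i) (sqrt eps)))"

definition post_conc_prob ::
  "(nat \<Rightarrow> real) \<Rightarrow> (nat \<Rightarrow> real) \<Rightarrow> (nat \<Rightarrow> real) \<Rightarrow> (nat \<Rightarrow> real) \<Rightarrow> real \<Rightarrow> nat \<Rightarrow> real \<Rightarrow> real \<Rightarrow> real" where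
  "post_conc_prob lam th eta tau eps m lo hi =
     (\<integral>Y. measure (posterior lam tau eta eps m Y)
              {v \<in> space (posterior lam tau eta eps m Y).
                 lo \<le> sqnorm (\<lambda>i. v i - th i) \<and> sqnorm (\<lambda>i. v i - th i) \<le> hi}
        \<partial>data_law lam th eps)"

end

theory Submission
  imports Defs
begin

text \<open>
  Under the sieve prior of dimension m the posterior is the product of the Gaussians
  N(\<theta>^Y_j, \<sigma>_j), j \<le> m, so a posterior draw is \<theta>^Y + z with independent centred Gaussian
  noise z, and its squared distance to \<theta>\<degree> is \<Sum>_{j \<le> m} (z_j + \<theta>^Y_j - \<theta>\<degree>_j)^2 + b_m.
  At the oracle dimension m\<degree> every \<sigma>_j is at most L\<degree> \<Phi>\<degree> / m\<degree> and \<Sum> \<sigma>_j \<le> \<Phi>\<degree>, so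
  Chebyshev's inequality for sums of independent squares shows that, outside events of
  probability O(L\<degree> / m\<degree>), the energies \<Sum> z_j^2 of the noise and of the data-driven part of
  \<theta>^Y - \<theta>\<degree> are at most 7\<Phi>\<degree>/5 each, while \<Sum> (z_j + \<theta>^Y_j - \<theta>\<degree>_j)^2 keeps a tenth of its
  mean. Since Assumption A bounds the pull of the prior, \<sigma>_j (\<eta>_j - \<theta>\<degree>_j) / \<tau>_j, by
  \<Phi>\<degree>/5 in total, the squared distance is at most 10\<Phi>\<degree>. For the lower bound either b_m alone
  exceeds \<Phi>\<degree>/K\<degree>, or \<Phi>\<degree> is the variance term and Assumption A gives
  \<Sum> \<sigma>_j \<ge> \<Phi>\<degree>/(1 + 1/d). Hence the expected posterior probability is at least
  1 - (25 + 5 (1 + 1/d)) L\<degree> / m\<degree>, which tends to 1 because m\<degree> \<rightarrow> \<infinity>.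
\<close>

section \<open>Gaussian moments and Chebyshev's inequality on product spaces\<close>

lemma has_bochner_integral_normal_poly4:
  fixes \<mu> \<sigma> a0 a1 a2 a3 a4 :: real
  assumes \<sigma>: "0 < \<sigma>"
  shows "has_bochner_integral lborel (\<lambda>x. normal_density \<mu> \<sigma> x *
           (a0 + a1 * (x - \<mu>) + a2 * (x - \<mu>)^2 + a3 * (x - \<mu>)^3 + a4 * (x - \<mu>)^4))
           (a0 + a2 * \<sigma>^2 + 3 * a4 * \<sigma>^4)"
proof -
  have m0: "has_bochner_integral lborel (\<lambda>x. normal_density \<mu> \<sigma> x * (x - \<mu>)^(2*0)) 1"
    using normal_moment_even[OF \<sigma>, of \<mu> 0] by simp
  have m1: "has_bochner_integral lborel (\<lambda>x. normal_density \<mu> \<sigma> x * (x - \<mu>)^(2*0+1)) 0"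
    using normal_moment_odd[OF \<sigma>, of \<mu> 0] by simp
  have m2: "has_bochner_integral lborel (\<lambda>x. normal_density \<mu> \<sigma> x * (x - \<mu>)^(2*1)) (\<sigma>^2)"
    using normal_moment_even[OF \<sigma>, of \<mu> 1] by (simp add: power2_eq_square)
  have m3: "has_bochner_integral lborel (\<lambda>x. normal_density \<mu> \<sigma> x * (x - \<mu>)^(2*1+1)) 0"
    using normal_moment_odd[OF \<sigma>, of \<mu> 1] by simp
  have m4: "has_bochner_integral lborel (\<lambda>x. normal_density \<mu> \<sigma> x * (x - \<mu>)^(2*2)) (3 * \<sigma>^4)"
    using normal_moment_even[OF \<sigma>, of \<mu> 2]
    by (simp add: fact_numeral eval_nat_numeral field_simps)
  have "has_bochner_integral lborel (\<lambda>x. a0 * (normal_density \<mu> \<sigma> x * (x - \<mu>)^(2*0))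
      + a1 * (normal_density \<mu> \<sigma> x * (x - \<mu>)^(2*0+1)) + a2 * (normal_density \<mu> \<sigma> x * (x - \<mu>)^(2*1))
      + a3 * (normal_density \<mu> \<sigma> x * (x - \<mu>)^(2*1+1)) + a4 * (normal_density \<mu> \<sigma> x * (x - \<mu>)^(2*2)))
     (a0 * 1 + a1 * 0 + a2 * \<sigma>^2 + a3 * 0 + a4 * (3 * \<sigma>^4))"
    by (intro has_bochner_integral_add has_bochner_integral_mult_right m0 m1 m2 m3 m4)
  then show ?thesis
    by (rule has_bochner_integral_cong[THEN iffD1, rotated 3]) (auto simp: distrib_left mult_ac)
qed

lemma
  fixes \<mu> \<sigma> c :: real
  assumes \<sigma>: "0 < \<sigma>"
  shows has_bochner_integral_normal_sq_dev:
      "has_bochner_integral (density lborel (normal_density \<mu> \<sigma>)) (\<lambda>x. (x - c)^2) (\<sigma>^2 + (\<mu> - c)^2)"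
    and has_bochner_integral_normal_sq_dev_var:
      "has_bochner_integral (density lborel (normal_density \<mu> \<sigma>))
         (\<lambda>x. ((x - c)^2 - (\<sigma>^2 + (\<mu> - c)^2))^2) (2 * \<sigma>^4 + 4 * \<sigma>^2 * (\<mu> - c)^2)"
proof -
  let ?\<delta> = "\<mu> - c"
  have "has_bochner_integral lborel (\<lambda>x. normal_density \<mu> \<sigma> x *
      (?\<delta>^2 + (2 * ?\<delta>) * (x - \<mu>) + 1 * (x - \<mu>)^2 + 0 * (x - \<mu>)^3 + 0 * (x - \<mu>)^4))
      (?\<delta>^2 + 1 * \<sigma>^2 + 3 * 0 * \<sigma>^4)"
    by (rule has_bochner_integral_normal_poly4[OF \<sigma>])
  then have "has_bochner_integral lborel (\<lambda>x. normal_density \<mu> \<sigma> x *\<^sub>R (x - c)^2) (\<sigma>^2 + ?\<delta>^2)"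
    by (rule has_bochner_integral_cong[THEN iffD1, rotated 3]) (auto simp: power2_eq_square algebra_simps)
  then show "has_bochner_integral (density lborel (normal_density \<mu> \<sigma>)) (\<lambda>x. (x - c)^2) (\<sigma>^2 + ?\<delta>^2)"
    by (intro has_bochner_integral_density) auto
  have "has_bochner_integral lborel (\<lambda>x. normal_density \<mu> \<sigma> x *
      (\<sigma>^4 + (- 4 * ?\<delta> * \<sigma>^2) * (x - \<mu>) + (4 * ?\<delta>^2 - 2 * \<sigma>^2) * (x - \<mu>)^2
        + (4 * ?\<delta>) * (x - \<mu>)^3 + 1 * (x - \<mu>)^4))
      (\<sigma>^4 + (4 * ?\<delta>^2 - 2 * \<sigma>^2) * \<sigma>^2 + 3 * 1 * \<sigma>^4)"
    by (rule has_bochner_integral_normal_poly4[OF \<sigma>])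
  then have "has_bochner_integral lborel
      (\<lambda>x. normal_density \<mu> \<sigma> x *\<^sub>R ((x - c)^2 - (\<sigma>^2 + ?\<delta>^2))^2) (2 * \<sigma>^4 + 4 * \<sigma>^2 * ?\<delta>^2)"
    by (rule has_bochner_integral_cong[THEN iffD1, rotated 3])
       (auto simp: power2_eq_square power3_eq_cube eval_nat_numeral algebra_simps)
  then show "has_bochner_integral (density lborel (normal_density \<mu> \<sigma>))
      (\<lambda>x. ((x - c)^2 - (\<sigma>^2 + ?\<delta>^2))^2) (2 * \<sigma>^4 + 4 * \<sigma>^2 * ?\<delta>^2)"
    by (intro has_bochner_integral_density) auto
qed

lemma (in product_prob_space)
  fixes g :: "'a \<Rightarrow> real"
  assumes "finite J" "i \<in> J" "integrable (M i) g"
  shows integrable_PiM_component: "integrable (PiM J M) (\<lambda>x. g (x i))"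
    and integral_PiM_component: "integral\<^sup>L (PiM J M) (\<lambda>x. g (x i)) = integral\<^sup>L (M i) g"
proof -
  define f where "f k = (if k = i then g else (\<lambda>_. 1::real))" for k
  have int: "\<And>k. k \<in> J \<Longrightarrow> integrable (M k) (f k)"
    using assms by (auto simp: f_def)
  have eq: "(\<lambda>x. \<Prod>k\<in>J. f k (x k)) = (\<lambda>x. g (x i))"
    using assms by (auto simp: f_def if_distrib[of "\<lambda>f. f _"] prod.If_cases cong: if_cong)
  show "integrable (PiM J M) (\<lambda>x. g (x i))"
    using product_integrable_prod[OF assms(1) int] eq by simp
  have "integral\<^sup>L (PiM J M) (\<lambda>x. g (x i)) = (\<Prod>k\<in>J. integral\<^sup>L (M k) (f k))"
    using product_integral_prod[OF assms(1) int] eq by simp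
  also have "\<dots> = integral\<^sup>L (M i) g"
    using assms
    by (simp add: f_def if_distrib[of "\<lambda>f. integral\<^sup>L _ f"] prod.If_cases M.prob_space cong: if_cong)
  finally show "integral\<^sup>L (PiM J M) (\<lambda>x. g (x i)) = integral\<^sup>L (M i) g" .
qed

lemma (in product_prob_space)
  fixes g h :: "'a \<Rightarrow> real"
  assumes "finite J" "i \<in> J" "j \<in> J" "i \<noteq> j" "integrable (M i) g" "integrable (M j) h"
  shows integrable_PiM_component_pair: "integrable (PiM J M) (\<lambda>x. g (x i) * h (x j))"
    and integral_PiM_component_pair:
      "integral\<^sup>L (PiM J M) (\<lambda>x. g (x i) * h (x j)) = integral\<^sup>L (M i) g * integral\<^sup>L (M j) h"
proof -
  define f where "f k = (if k = i then g else if k = j then h else (\<lambda>_. 1::real))" for k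
  have int: "\<And>k. k \<in> J \<Longrightarrow> integrable (M k) (f k)"
    using assms by (auto simp: f_def)
  have prod_split: "(\<Prod>k\<in>J. F k) = F i * F j * (\<Prod>k\<in>J-{i,j}. F k)" for F :: "'i \<Rightarrow> real"
  proof -
    have "(\<Prod>k\<in>J. F k) = F i * (\<Prod>k\<in>J-{i}. F k)"
      using assms by (simp add: prod.remove)
    also have "(\<Prod>k\<in>J-{i}. F k) = F j * (\<Prod>k\<in>J-{i}-{j}. F k)"
      using assms by (subst prod.remove[of _ j]) auto
    finally show ?thesis by (simp add: Diff_insert2[symmetric] insert_commute mult.assoc)
  qed
  have eq: "(\<lambda>x. \<Prod>k\<in>J. f k (x k)) = (\<lambda>x. g (x i) * h (x j))"
    using assms by (auto simp: prod_split f_def intro!: prod.neutral)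
  show "integrable (PiM J M) (\<lambda>x. g (x i) * h (x j))"
    using product_integrable_prod[OF assms(1) int] eq by simp
  have "integral\<^sup>L (PiM J M) (\<lambda>x. g (x i) * h (x j)) = (\<Prod>k\<in>J. integral\<^sup>L (M k) (f k))"
    using product_integral_prod[OF assms(1) int] eq by simp
  also have "\<dots> = integral\<^sup>L (M i) g * integral\<^sup>L (M j) h"
    using assms by (subst prod_split) (auto simp: f_def M.prob_space intro!: prod.neutral)
  finally show "integral\<^sup>L (PiM J M) (\<lambda>x. g (x i) * h (x j)) = integral\<^sup>L (M i) g * integral\<^sup>L (M j) h" .
qed

lemma Chebyshev_PiM_sum_sq_finite:
  fixes M :: "nat \<Rightarrow> real measure" and \<mu> \<sigma> w c :: "nat \<Rightarrow> real" and t :: real and m :: nat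
  assumes prob: "\<And>i. prob_space (M i)"
    and M_normal: "\<And>i. i < m \<Longrightarrow> M i = density lborel (normal_density (\<mu> i) (\<sigma> i))"
    and \<sigma>: "\<And>i. i < m \<Longrightarrow> 0 < \<sigma> i" and t: "0 < t"
  shows "measure (PiM {..<m} M) {x \<in> space (PiM {..<m} M).
            t \<le> \<bar>(\<Sum>i<m. w i * (x i - c i)^2) - (\<Sum>i<m. w i * ((\<sigma> i)^2 + (\<mu> i - c i)^2))\<bar>}
         \<le> (\<Sum>i<m. (w i)^2 * (2 * (\<sigma> i)^4 + 4 * (\<sigma> i)^2 * (\<mu> i - c i)^2)) / t^2"
proof -
  interpret P: product_prob_space M "{..<m}" by (rule product_prob_spaceI[OF prob])
  define D where "D i x = (x - c i)^2 - ((\<sigma> i)^2 + (\<mu> i - c i)^2)" for i x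
  define V where "V i = 2 * (\<sigma> i)^4 + 4 * (\<sigma> i)^2 * (\<mu> i - c i)^2" for i
  define Z where "Z x = (\<Sum>i<m. w i * D i (x i))" for x
  have Z_eq: "(\<Sum>i<m. w i * (x i - c i)^2) - (\<Sum>i<m. w i * ((\<sigma> i)^2 + (\<mu> i - c i)^2)) = Z x" for x
    by (simp add: Z_def D_def sum_subtractf[symmetric] right_diff_distrib)
  have mean_D: "has_bochner_integral (M i) (D i) 0" if "i < m" for i
  proof -
    have "has_bochner_integral (M i) (\<lambda>_. (\<sigma> i)^2 + (\<mu> i - c i)^2) ((\<sigma> i)^2 + (\<mu> i - c i)^2)"
      by (simp add: has_bochner_integral_iff prob_space.prob_space[OF prob])
    then have "has_bochner_integral (M i) (\<lambda>x. (x - c i)^2 - ((\<sigma> i)^2 + (\<mu> i - c i)^2))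
           (((\<sigma> i)^2 + (\<mu> i - c i)^2) - ((\<sigma> i)^2 + (\<mu> i - c i)^2))"
      using has_bochner_integral_normal_sq_dev[OF \<sigma>[OF that], of "\<mu> i" "c i"] M_normal[OF that]
      by (intro has_bochner_integral_diff) auto
    then show ?thesis by (simp add: D_def[abs_def])
  qed
  have var_D: "has_bochner_integral (M i) (\<lambda>x. D i x * D i x) (V i)" if "i < m" for i
    using has_bochner_integral_normal_sq_dev_var[OF \<sigma>[OF that], of "\<mu> i" "c i"] M_normal[OF that]
    by (simp add: D_def V_def power2_eq_square)
  \<comment> \<open>independence kills the off-diagonal terms of \<open>Z\<^sup>2\<close>\<close>
  have cov_D: "has_bochner_integral (PiM {..<m} M) (\<lambda>x. D i (x i) * D j (x j)) (if i = j then V i else 0)"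
    if "i < m" "j < m" for i j
  proof (cases "i = j")
    case True
    then show ?thesis
      using P.integrable_PiM_component[of "{..<m}" i "\<lambda>x. D i x * D i x"]
        P.integral_PiM_component[of "{..<m}" i "\<lambda>x. D i x * D i x"] var_D that
      by (simp add: has_bochner_integral_iff)
  next
    case False
    then show ?thesis
      using P.integrable_PiM_component_pair[of "{..<m}" i j "D i" "D j"]
        P.integral_PiM_component_pair[of "{..<m}" i j "D i" "D j"] mean_D that
      by (simp add: has_bochner_integral_iff)
  qed
  have "(Z x)^2 = (\<Sum>i<m. \<Sum>j<m. w i * w j * (D i (x i) * D j (x j)))" for x
    by (simp add: Z_def power2_eq_square sum_product mult_ac)
  then have "has_bochner_integral (PiM {..<m} M) (\<lambda>x. (Z x)^2)
      (\<Sum>i<m. \<Sum>j<m. w i * w j * (if i = j then V i else 0))"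
    by (simp only:) (intro has_bochner_integral_sum has_bochner_integral_mult_right cov_D, auto)
  moreover have "(\<Sum>i<m. \<Sum>j<m. w i * w j * (if i = j then V i else 0)) = (\<Sum>i<m. (w i)^2 * V i)"
    by (simp add: if_distrib[of "\<lambda>x. _ * x"] power2_eq_square cong: if_cong)
  ultimately have Z_sq: "has_bochner_integral (PiM {..<m} M) (\<lambda>x. (Z x)^2) (\<Sum>i<m. (w i)^2 * V i)"
    by simp
  have "measure (PiM {..<m} M) {x \<in> space (PiM {..<m} M). t^2 \<le> (Z x)^2}
      \<le> (\<integral>x. (Z x)^2 \<partial>PiM {..<m} M) / t^2"
    using Z_sq t by (intro integral_Markov_inequality_measure[where A="space (PiM {..<m} M)"])
      (auto simp: has_bochner_integral_iff)
  moreover have "{x \<in> space (PiM {..<m} M).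
            t \<le> \<bar>(\<Sum>i<m. w i * (x i - c i)^2) - (\<Sum>i<m. w i * ((\<sigma> i)^2 + (\<mu> i - c i)^2))\<bar>}
        = {x \<in> space (PiM {..<m} M). t^2 \<le> (Z x)^2}"
    using t by (auto simp: Z_eq abs_le_square_iff[symmetric])
  ultimately show ?thesis
    using Z_sq by (simp add: V_def has_bochner_integral_iff)
qed

lemma Chebyshev_PiM_sum_sq:
  fixes M :: "nat \<Rightarrow> real measure" and \<mu> \<sigma> w c :: "nat \<Rightarrow> real" and t :: real and m :: nat
  assumes prob: "\<And>i. prob_space (M i)" and sets_M: "\<And>i. sets (M i) = sets borel"
    and M_normal: "\<And>i. i < m \<Longrightarrow> M i = density lborel (normal_density (\<mu> i) (\<sigma> i))"
    and \<sigma>: "\<And>i. i < m \<Longrightarrow> 0 < \<sigma> i" and t: "0 < t"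
  shows "measure (PiM UNIV M) {x \<in> space (PiM UNIV M).
            t \<le> \<bar>(\<Sum>i<m. w i * (x i - c i)^2) - (\<Sum>i<m. w i * ((\<sigma> i)^2 + (\<mu> i - c i)^2))\<bar>}
         \<le> (\<Sum>i<m. (w i)^2 * (2 * (\<sigma> i)^4 + 4 * (\<sigma> i)^2 * (\<mu> i - c i)^2)) / t^2"
proof -
  interpret P: product_prob_space M UNIV by (rule product_prob_spaceI[OF prob])
  define F where "F x = \<bar>(\<Sum>i<m. w i * (x i - c i)^2) - (\<Sum>i<m. w i * ((\<sigma> i)^2 + (\<mu> i - c i)^2))\<bar>"
    for x :: "nat \<Rightarrow> real"
  have [measurable]: "(\<lambda>x. x i) \<in> borel_measurable (PiM J M)" if "i \<in> J" for i J
    using measurable_component_singleton[OF that, of M] measurable_cong_sets[OF refl sets_M] by blast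
  have "{x \<in> space (PiM {..<m} M). t \<le> F x} \<in> sets (PiM {..<m} M)"
    unfolding F_def by measurable
  then have "measure (PiM UNIV M) {x \<in> space (PiM UNIV M). t \<le> F x}
      = measure (distr (PiM UNIV M) (PiM {..<m} M) (\<lambda>x. restrict x {..<m}))
          {x \<in> space (PiM {..<m} M). t \<le> F x}"
    by (subst measure_distr)
       (auto intro!: arg_cong[where f="measure _"] measurable_restrict_subset
         simp: F_def space_PiM PiE_iff)
  also have "\<dots> = measure (PiM {..<m} M) {x \<in> space (PiM {..<m} M). t \<le> F x}"
    by (subst P.distr_PiM_restrict_finite) auto
  finally show ?thesis
    using Chebyshev_PiM_sum_sq_finite[OF prob M_normal \<sigma> t] by (simp add: F_def)
qed

section \<open>The posterior as a translated product of centred Gaussians\<close>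

lemma distr_normal_density_translate:
  fixes s c :: real
  assumes s: "0 < s"
  shows "distr (density lborel (normal_density 0 s)) borel (\<lambda>x. x + c) = density lborel (normal_density c s)"
proof -
  let ?D = "density lborel (\<lambda>x. ennreal (normal_density 0 s x))"
  interpret prob_space ?D by (rule prob_space_normal_density) (rule s)
  have "distributed ?D lborel (\<lambda>x. x) (normal_density 0 s)"
    unfolding distributed_def by (auto simp: distr_id2)
  then have "distributed ?D lborel (\<lambda>x. c + 1 * x) (normal_density (c + 1 * 0) (\<bar>1\<bar> * s))"
    by (rule normal_density_affine) (use s in auto)
  then have "distr ?D lborel (\<lambda>x. c + x) = density lborel (normal_density c s)"
    by (simp add: distributed_def)
  moreover have "distr ?D borel (\<lambda>x. x + c) = distr ?D lborel (\<lambda>x. c + x)"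
    by (intro distr_cong) (auto simp: add.commute)
  ultimately show ?thesis by simp
qed

lemma distr_PiM_translate:
  fixes M :: "'i \<Rightarrow> real measure" and c :: "'i \<Rightarrow> real"
  assumes prob: "\<And>i. prob_space (M i)" and sets_M: "\<And>i. sets (M i) = sets borel"
  shows "distr (PiM UNIV M) (PiM UNIV (\<lambda>_. borel)) (\<lambda>z i. z i + c i)
       = PiM UNIV (\<lambda>i. distr (M i) borel (\<lambda>x. x + c i))"
    (is "distr _ _ ?f = PiM UNIV ?T")
proof -
  have space_M: "space (M i) = UNIV" for i
    using sets_eq_imp_space_eq[OF sets_M] by simp
  have sets_T: "sets (?T i) = sets borel" for i by simp
  interpret T: product_prob_space ?T UNIV
    by (rule product_prob_spaceI)
       (auto intro!: prob_space.prob_space_distr prob simp: measurable_cong_sets[OF sets_M refl])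
  have f_meas: "?f \<in> measurable (PiM UNIV M) (PiM UNIV (\<lambda>_. borel))"
  proof (rule measurable_PiM_single')
    fix i
    have "(\<lambda>z. z i) \<in> measurable (PiM UNIV M) borel"
      using measurable_component_singleton[of i UNIV M] measurable_cong_sets[OF refl sets_M] by blast
    then show "(\<lambda>z. z i + c i) \<in> measurable (PiM UNIV M) borel" by measurable
  qed (auto simp: space_PiM)
  show ?thesis
  proof (rule T.PiM_eq)
    show "sets (distr (PiM UNIV M) (PiM UNIV (\<lambda>_. borel)) ?f) = sets (PiM UNIV ?T)"
      by (simp add: sets_PiM_cong[OF refl sets_T])
  next
    fix J :: "'i set" and F
    assume J: "finite J" "J \<subseteq> UNIV" and F: "\<And>j. j \<in> J \<Longrightarrow> F j \<in> sets (?T j)"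
    have pre: "(\<lambda>x. x + c j) -` F j \<in> sets (M j)" if "j \<in> J" for j
    proof -
      have "(\<lambda>x. x + c j) -` F j \<inter> space borel \<in> sets borel"
        using F[OF that] by (intro measurable_sets[of _ borel borel]) auto
      then show ?thesis by (simp add: sets_M)
    qed
    have "prod_emb UNIV ?T J (Pi\<^sub>E J F) \<in> sets (PiM UNIV ?T)"
      by (rule sets_PiM_I) (use J F in auto)
    then have emb: "prod_emb UNIV ?T J (Pi\<^sub>E J F) \<in> sets (PiM UNIV (\<lambda>_. borel))"
      by (simp add: sets_PiM_cong[OF refl sets_T])
    have "emeasure (distr (PiM UNIV M) (PiM UNIV (\<lambda>_. borel)) ?f) (prod_emb UNIV ?T J (Pi\<^sub>E J F))
        = emeasure (PiM UNIV M) (?f -` prod_emb UNIV ?T J (Pi\<^sub>E J F) \<inter> space (PiM UNIV M))"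
      by (rule emeasure_distr[OF f_meas emb])
    also have "?f -` prod_emb UNIV ?T J (Pi\<^sub>E J F) \<inter> space (PiM UNIV M)
        = prod_emb UNIV M J (Pi\<^sub>E J (\<lambda>j. (\<lambda>x. x + c j) -` F j))"
      by (auto simp: prod_emb_def space_PiM PiE_iff space_M)
    also have "emeasure (PiM UNIV M) \<dots> = (\<Prod>j\<in>J. emeasure (M j) ((\<lambda>x. x + c j) -` F j))"
      using J pre by (intro emeasure_PiM_emb prob) auto
    also have "\<dots> = (\<Prod>j\<in>J. emeasure (?T j) (F j))"
      using F by (intro prod.cong refl)
        (auto simp: emeasure_distr space_M measurable_cong_sets[OF sets_M refl])
    finally show "emeasure (distr (PiM UNIV M) (PiM UNIV (\<lambda>_. borel)) ?f) (prod_emb UNIV ?T J (Pi\<^sub>E J F))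
        = (\<Prod>j\<in>J. emeasure (?T j) (F j))" .
  qed
qed

lemma Lam_pos: "lam i \<noteq> 0 \<Longrightarrow> 0 < Lam lam i"
  by (simp add: Lam_def)

context
  fixes lam tau :: "nat \<Rightarrow> real" and eps :: real and i :: nat
  assumes eps: "0 < eps" and lam_nz: "lam i \<noteq> 0" and tau: "0 < tau i"
begin

lemma post_var_denom_pos: "0 < (lam i)^2 / eps + 1 / tau i"
  using eps lam_nz tau by (simp add: add_pos_pos)

lemma post_var_pos: "0 < post_var lam tau eps i"
  using post_var_denom_pos by (simp add: post_var_def)

lemma post_var_le: "post_var lam tau eps i \<le> eps * Lam lam i"
proof -
  have "post_var lam tau eps i \<le> 1 / ((lam i)^2 / eps)"
    unfolding post_var_def using eps tau lam_nz post_var_denom_pos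
    by (intro divide_left_mono) auto
  then show ?thesis by (simp add: Lam_def)
qed

lemma post_var_ge:
  assumes d: "0 < d" and tau_ge: "d * (eps * Lam lam i) \<le> tau i"
  shows "eps * Lam lam i / (1 + 1 / d) \<le> post_var lam tau eps i"
proof -
  have L: "0 < eps * Lam lam i" using eps Lam_pos[of lam i, OF lam_nz] by simp
  have "1 / tau i \<le> 1 / (d * (eps * Lam lam i))"
    using tau_ge d L tau by (intro divide_left_mono) auto
  also have "\<dots> = (lam i)^2 / (d * eps)" using lam_nz by (simp add: Lam_def)
  also have "\<dots> = (1 + 1 / d) / (eps * Lam lam i) - (lam i)^2 / eps"
    using d eps lam_nz by (simp add: Lam_def field_simps)
  finally have "(lam i)^2 / eps + 1 / tau i \<le> (1 + 1 / d) / (eps * Lam lam i)"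
    by simp
  then have "1 / ((1 + 1 / d) / (eps * Lam lam i)) \<le> post_var lam tau eps i"
    unfolding post_var_def using post_var_denom_pos d L
    by (intro divide_left_mono) (auto intro!: mult_pos_pos divide_pos_pos add_pos_pos)
  then show ?thesis using d by (simp add: field_simps)
qed

lemma post_var_div_tau_sq_le:
  assumes d: "0 < d" and tau_ge: "d * (sqrt eps * sqrt (Lam lam i)) \<le> tau i"
  shows "(post_var lam tau eps i / tau i)^2 \<le> eps * Lam lam i / d^2"
proof -
  have L: "0 < Lam lam i" by (rule Lam_pos[of lam i, OF lam_nz])
  have "post_var lam tau eps i / tau i \<le> eps * Lam lam i / (d * (sqrt eps * sqrt (Lam lam i)))"
    using post_var_le post_var_pos tau_ge d eps L by (intro frac_le) auto
  also have "\<dots> = sqrt eps * sqrt (Lam lam i) / d"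
    using eps L d by (simp add: field_simps)
  finally have "(post_var lam tau eps i / tau i)^2 \<le> (sqrt eps * sqrt (Lam lam i) / d)^2"
    using post_var_pos tau by (intro power_mono) auto
  also have "\<dots> = eps * Lam lam i / d^2"
    using eps L by (simp add: power_divide power_mult_distrib)
  finally show ?thesis .
qed

lemma post_var_noise_le: "(post_var lam tau eps i * lam i / eps)^2 * eps \<le> post_var lam tau eps i"
proof -
  have "(post_var lam tau eps i * lam i / eps)^2 * eps
      = post_var lam tau eps i * (post_var lam tau eps i * ((lam i)^2 / eps))"
    using eps by (simp add: power_mult_distrib power_divide power2_eq_square)
  also have "\<dots> \<le> post_var lam tau eps i * 1"
    using post_var_le post_var_pos eps lam_nz
    by (intro mult_left_mono) (auto simp: Lam_def field_simps)
  finally show ?thesis by simp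
qed

lemma post_mean_minus:
  "post_mean lam tau eta eps Y i - th i
     = post_var lam tau eps i * (eta i - th i) / tau i
       + post_var lam tau eps i * lam i * (Y i - lam i * th i) / eps"
proof -
  have "post_var lam tau eps i * ((lam i)^2 / eps + 1 / tau i) = 1"
    using post_var_denom_pos by (simp add: post_var_def)
  then have "th i = post_var lam tau eps i * ((lam i)^2 / eps + 1 / tau i) * th i" by simp
  then show ?thesis
    using eps tau by (simp add: post_mean_def field_simps power2_eq_square)
qed

end

definition posterior_noise :: "(nat \<Rightarrow> real) \<Rightarrow> (nat \<Rightarrow> real) \<Rightarrow> real \<Rightarrow> nat \<Rightarrow> (nat \<Rightarrow> real) measure" where
  "posterior_noise lam tau eps m =
     (\<Pi>\<^sub>M i\<in>UNIV. if i < m then density lborel (normal_density 0 (sqrt (post_var lam tau eps i)))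
                           else return borel 0)"

definition posterior_center ::
  "(nat \<Rightarrow> real) \<Rightarrow> (nat \<Rightarrow> real) \<Rightarrow> (nat \<Rightarrow> real) \<Rightarrow> real \<Rightarrow> nat \<Rightarrow> (nat \<Rightarrow> real) \<Rightarrow> nat \<Rightarrow> real" where
  "posterior_center lam tau eta eps m Y i = (if i < m then post_mean lam tau eta eps Y i else eta i)"

lemma posterior_eq_distr_noise:
  assumes eps: "0 < eps" and lam_nz: "\<And>i. lam i \<noteq> 0" and tau: "\<And>i. 0 < tau i"
  shows "posterior lam tau eta eps m Y
       = distr (posterior_noise lam tau eps m) (PiM UNIV (\<lambda>_. borel))
           (\<lambda>z i. z i + posterior_center lam tau eta eps m Y i)"
proof -
  have \<sigma>: "0 < sqrt (post_var lam tau eps i)" for i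
    using post_var_pos[OF eps lam_nz tau] by simp
  have "distr (posterior_noise lam tau eps m) (PiM UNIV (\<lambda>_. borel))
           (\<lambda>z i. z i + posterior_center lam tau eta eps m Y i)
      = (\<Pi>\<^sub>M i\<in>UNIV. distr (if i < m then density lborel (normal_density 0 (sqrt (post_var lam tau eps i)))
                                     else return borel 0) borel
                        (\<lambda>x. x + posterior_center lam tau eta eps m Y i))"
    unfolding posterior_noise_def using \<sigma>
    by (intro distr_PiM_translate) (auto intro: prob_space_normal_density prob_space_return)
  also have "\<dots> = posterior lam tau eta eps m Y"
    unfolding posterior_def posterior_center_def using \<sigma>
    by (intro PiM_cong refl) (auto simp: distr_normal_density_translate distr_return)
  finally show ?thesis ..
qed

section \<open>Bias and oracle dimension\<close>

lemma sqnorm_split: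
  assumes s: "summable (\<lambda>i. (th i - eta i)^2)" and v: "\<And>i. m \<le> i \<Longrightarrow> v i = eta i"
  shows "sqnorm (\<lambda>i. v i - th i) = (\<Sum>i<m. (v i - th i)^2) + bias th eta m"
proof -
  have tail: "(\<lambda>i. (v (i + m) - th (i + m))^2) = (\<lambda>i. (th (i + m) - eta (i + m))^2)"
    using v by (auto simp: power2_commute)
  have "summable (\<lambda>i. (th (i + m) - eta (i + m))^2)"
    using s by (subst summable_iff_shift)
  then have "summable (\<lambda>i. (v (i + m) - th (i + m))^2)" by (simp add: tail)
  then have "summable (\<lambda>i. (v i - th i)^2)" by (subst (asm) summable_iff_shift)
  from suminf_split_initial_segment[OF this, of m] show ?thesis
    unfolding sqnorm_def bias_def by (simp add: tail)
qed

lemma bias_nonneg: "summable (\<lambda>i. (th i - eta i)^2) \<Longrightarrow> 0 \<le> bias th eta m"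
  unfolding bias_def using summable_iff_shift[of "\<lambda>i. (th i - eta i)^2" m]
  by (intro suminf_nonneg) auto

lemma bias_tendsto_zero:
  assumes s: "summable (\<lambda>i. (th i - eta i)^2)"
  shows "bias th eta \<longlonglongrightarrow> 0"
proof -
  have "bias th eta = (\<lambda>m. sqnorm (\<lambda>i. th i - eta i) - (\<Sum>i<m. (th i - eta i)^2))"
  proof
    fix m show "bias th eta m = sqnorm (\<lambda>i. th i - eta i) - (\<Sum>i<m. (th i - eta i)^2)"
      unfolding bias_def sqnorm_def using suminf_split_initial_segment[OF s, of m] by simp
  qed
  moreover have "(\<lambda>m. \<Sum>i<m. (th i - eta i)^2) \<longlonglongrightarrow> sqnorm (\<lambda>i. th i - eta i)"
    unfolding sqnorm_def by (rule summable_LIMSEQ[OF s])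
  then have "(\<lambda>m. sqnorm (\<lambda>i. th i - eta i) - (\<Sum>i<m. (th i - eta i)^2))
      \<longlonglongrightarrow> sqnorm (\<lambda>i. th i - eta i) - sqnorm (\<lambda>i. th i - eta i)"
    by (intro tendsto_diff tendsto_const)
  ultimately show ?thesis by simp
qed

lemma mult_LamBar_eq: "eps * real m * LamBar lam m = (\<Sum>i<m. eps * Lam lam i)"
proof (cases "m = 0")
  case False
  then have "eps * real m * LamBar lam m = eps * (\<Sum>i<m. Lam lam i)" by (simp add: LamBar_def)
  then show ?thesis by (simp add: sum_distrib_left)
qed (simp add: LamBar_def)

lemma Phi_pos:
  assumes "0 < eps" "\<And>i. lam i \<noteq> 0" "1 \<le> m"
  shows "0 < Phi lam th eta eps m"
proof -
  have "0 < (\<Sum>i<m. eps * Lam lam i)"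
    using assms Lam_pos by (intro sum_pos) (auto simp: lessThan_empty_iff)
  then show ?thesis by (simp add: Phi_def mult_LamBar_eq)
qed

lemma Phi_ge_linear:
  assumes eps: "0 < eps" and B: "\<And>i. \<bar>lam i\<bar> \<le> B" and lam_nz: "\<And>i. lam i \<noteq> 0"
  shows "eps * real k / B^2 \<le> Phi lam th eta eps k"
proof -
  have "1 / B^2 \<le> Lam lam i" for i
  proof -
    have lam_sq: "0 < (lam i)^2" using lam_nz[of i] by simp
    have le: "(lam i)^2 \<le> B^2"
      using power_mono[OF B[of i] abs_ge_zero, of 2] by simp
    have "0 < B^2 * (lam i)^2" using lam_sq le by (intro mult_pos_pos) linarith+
    then show ?thesis
      unfolding Lam_def using le by (intro divide_left_mono) auto
  qed
  then have "(\<Sum>i<k. eps * (1 / B^2)) \<le> (\<Sum>i<k. eps * Lam lam i)"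
    using eps by (intro sum_mono mult_left_mono) auto
  also have "\<dots> \<le> Phi lam th eta eps k" by (simp add: Phi_def mult_LamBar_eq)
  finally show ?thesis by (simp add: mult.commute)
qed

lemma oracle_dim_minimal:
  assumes eps: "0 < eps" and lam_nz: "\<And>i. lam i \<noteq> 0" and bdd: "\<exists>B. \<forall>i. \<bar>lam i\<bar> \<le> B"
  shows "1 \<le> oracle_dim lam th eta eps \<and>
    (\<forall>k\<ge>1. Phi lam th eta eps (oracle_dim lam th eta eps) \<le> Phi lam th eta eps k)"
proof -
  let ?P = "Phi lam th eta eps"
  obtain B where B: "\<And>i. \<bar>lam i\<bar> \<le> B" using bdd by auto
  have B_pos: "0 < B" using B[of 0] lam_nz[of 0] by linarith
  \<comment> \<open>\<open>?P\<close> grows linearly, so beyond \<open>n\<close> it exceeds \<open>?P 1\<close> and the minimum is attained in \<open>{1..n}\<close>\<close>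
  define n where "n = nat \<lceil>?P 1 * B^2 / eps\<rceil> + 1"
  have "Min (?P ` {1..n}) \<in> ?P ` {1..n}" by (intro Min_in) (auto simp: n_def)
  then obtain m0 where m0_in: "m0 \<in> {1..n}" and m0_eq: "?P m0 = Min (?P ` {1..n})" by auto
  have m0: "m0 \<in> {1..n}" "\<And>k. k \<in> {1..n} \<Longrightarrow> ?P m0 \<le> ?P k"
    using m0_in by (auto simp: m0_eq)
  have "?P m0 \<le> ?P k" if k: "1 \<le> k" for k
  proof (cases "k \<le> n")
    case True
    then show ?thesis using m0(2)[of k] k by simp
  next
    case False
    have "?P 1 * B^2 / eps < real k"
      using False real_nat_ceiling_ge[of "?P 1 * B^2 / eps"] unfolding n_def by linarith
    then have "?P 1 < eps * real k / B^2" using eps B_pos by (simp add: field_simps)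
    moreover have "?P m0 \<le> ?P 1" using m0(2)[of 1] by (simp add: n_def)
    ultimately show ?thesis
      using Phi_ge_linear[where lam=lam and th=th and eta=eta and k=k, OF eps B lam_nz] by linarith
  qed
  then have "\<exists>m. 1 \<le> m \<and> (\<forall>k\<ge>1. ?P m \<le> ?P k)" using m0 by auto
  then show ?thesis
    unfolding oracle_dim_def by (rule LeastI_ex)
qed

lemma oracle_rate_pos:
  assumes eps: "0 < eps" and lam_nz: "\<And>i. lam i \<noteq> 0" and bdd: "\<exists>B. \<forall>i. \<bar>lam i\<bar> \<le> B"
  shows "0 < oracle_rate lam th eta eps"
  unfolding oracle_rate_def
  by (intro Phi_pos[OF eps lam_nz] oracle_dim_minimal[OF eps lam_nz bdd, THEN conjunct1])

lemma oracle_rate_tendsto_zero: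
  assumes lam_nz: "\<And>i. lam i \<noteq> 0" and bdd: "\<exists>B. \<forall>i. \<bar>lam i\<bar> \<le> B"
    and s: "summable (\<lambda>i. (th i - eta i)^2)"
  shows "(oracle_rate lam th eta \<longlongrightarrow> 0) (at_right 0)"
proof (rule order_tendstoI)
  fix c :: real assume c: "c < 0"
  show "eventually (\<lambda>eps. c < oracle_rate lam th eta eps) (at_right 0)"
    using eventually_at_right_less[of 0]
  proof eventually_elim
    case (elim eps)
    show ?case
      using c oracle_rate_pos[where th=th and eta=eta, OF elim lam_nz bdd] by linarith
  qed
next
  fix c :: real assume c: "0 < c"
  obtain k0 where k0: "\<And>k. k0 \<le> k \<Longrightarrow> bias th eta k < c"
    using order_tendstoD(2)[OF bias_tendsto_zero[OF s] c] by (auto simp: eventually_sequentially)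
  define k where "k = max k0 1"
  have k: "1 \<le> k" "bias th eta k < c" using k0 by (auto simp: k_def)
  define X where "X = real k * LamBar lam k"
  have "X = (\<Sum>i<k. 1 * Lam lam i)" unfolding X_def using mult_LamBar_eq[of 1 k lam] by simp
  also have "\<dots> > 0" using k(1) Lam_pos lam_nz by (intro sum_pos) (auto simp: lessThan_empty_iff)
  finally have X_pos: "0 < X" .
  have "eventually (\<lambda>eps. 0 < eps \<and> eps < c / X) (at_right 0)"
    unfolding eventually_at_right_field using c X_pos by (intro exI[of _ "c / X"]) auto
  then show "eventually (\<lambda>eps. oracle_rate lam th eta eps < c) (at_right 0)"
  proof eventually_elim
    case (elim eps)
    then have "Phi lam th eta eps k < c"
      using k X_pos by (simp add: Phi_def X_def field_simps)
    moreover have "oracle_rate lam th eta eps \<le> Phi lam th eta eps k"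
      unfolding oracle_rate_def
      using oracle_dim_minimal[where th=th and eta=eta, OF conjunct1[OF elim] lam_nz bdd] k(1)
      by blast
    ultimately show ?case by linarith
  qed
qed

lemma le_G_eps:
  assumes m: "1 \<le> m" and eps: "0 < eps" and lam_nz: "lam 0 \<noteq> 0"
    and bound: "eps * real m * LamMax lam m \<le> Lam lam 0"
  shows "m \<le> G_eps lam eps"
proof -
  have Lam0: "0 < Lam lam 0" using lam_nz by (simp add: Lam_def)
  have LamMax: "Lam lam 0 \<le> LamMax lam m"
    unfolding LamMax_def using m by (intro Max_ge) auto
  have "eps * LamMax lam m \<le> eps * real m * LamMax lam m"
    using m eps LamMax Lam0 by (simp add: mult_le_cancel_left1)
  then have below: "eps * LamMax lam m \<le> Lam lam 0" using bound by linarith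
  have "eps * real m * Lam lam 0 \<le> eps * real m * LamMax lam m"
    using LamMax eps by (intro mult_left_mono) auto
  then have "eps * real m * Lam lam 0 \<le> 1 * Lam lam 0" using bound by linarith
  then have "real m \<le> 1 / eps"
    using Lam0 eps by (simp add: field_simps mult_le_cancel_right)
  then have "m \<le> nat \<lfloor>1 / eps\<rfloor>" by (rule le_nat_floor)
  then show ?thesis
    unfolding G_eps_def using m below
    by (intro Max_ge) (auto intro: finite_subset[of _ "{..nat \<lfloor>1 / eps\<rfloor>}"])
qed

section \<open>Posterior concentration at a fixed noise level\<close>

lemma (in prob_space) prob_ge_one_minus_two_events:
  assumes G: "G \<in> events" and B1: "B1 \<in> events" and B2: "B2 \<in> events"
    and AE: "AE x in M. x \<notin> B1 \<longrightarrow> x \<notin> B2 \<longrightarrow> x \<in> G"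
  shows "1 - prob B1 - prob B2 \<le> prob G"
proof -
  have "prob (space M - G) \<le> prob (B1 \<union> B2)"
    using AE B1 B2 by (intro finite_measure_mono_AE) auto
  also have "\<dots> \<le> prob B1 + prob B2" by (rule measure_Un_le[OF B1 B2])
  finally show ?thesis using prob_compl[OF G] by simp
qed

lemma (in prob_space) expectation_ge_off_event:
  fixes f :: "'a \<Rightarrow> real"
  assumes B: "B \<in> events" and f: "f \<in> borel_measurable M"
    and f_01: "\<And>x. x \<in> space M \<Longrightarrow> 0 \<le> f x \<and> f x \<le> 1"
    and c: "c \<le> 1" and f_ge: "\<And>x. x \<in> space M \<Longrightarrow> x \<notin> B \<Longrightarrow> c \<le> f x"
  shows "c - prob B \<le> expectation f"
proof -
  have int_f: "integrable M f"
    using f f_01 by (intro integrable_const_bound[where B=1]) auto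
  have int_g: "integrable M (\<lambda>x. c - indicator B x)"
    using B by (intro Bochner_Integration.integrable_diff) (auto simp: emeasure_eq_measure)
  have pointwise: "c - indicator B x \<le> f x" if "x \<in> space M" for x
    using f_01[OF that] f_ge[OF that] c by (cases "x \<in> B") auto
  have "c - prob B = expectation (\<lambda>x. c - indicator B x)"
    using B by (subst Bochner_Integration.integral_diff) (auto simp: emeasure_eq_measure prob_space)
  also have "\<dots> \<le> expectation f"
    using int_g int_f pointwise by (intro integral_mono)
  finally show ?thesis .
qed

lemma power2_sum3_le: "((x::real) + y + w)^2 \<le> 3 * (x^2 + y^2 + w^2)"
proof -
  have "0 \<le> (x - y)^2 + (y - w)^2 + (x - w)^2" by simp
  then show ?thesis by (simp add: power2_eq_square algebra_simps)
qed

definition conc_factor :: "real \<Rightarrow> real \<Rightarrow> real \<Rightarrow> real" where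
  "conc_factor d L s = 10 * max (1 + 1 / d) (s / d^2) * L"

text \<open>
  A fixed noise level, with m in the role of the oracle dimension: LamMax_le is the
  hypothesis on L\<degree>, and m_large, which holds once m\<degree> is large, keeps the pull of the prior
  below \<Phi>/5.
\<close>

locale sieve_fixed_noise =
  fixes lam th eta tau :: "nat \<Rightarrow> real" and eps d L :: real and m :: nat
  assumes eps_pos: "0 < eps" and lam_nz: "\<And>i. lam i \<noteq> 0" and tau_pos: "\<And>i. 0 < tau i"
    and d_pos: "0 < d" and L_ge_1: "1 \<le> L" and m_ge_1: "1 \<le> m"
    and th_eta_l2: "summable (\<lambda>i. (th i - eta i)^2)"
    and LamMax_le: "eps * real m * LamMax lam m \<le> L * Phi lam th eta eps m"
    and tau_ge: "\<And>i. i < m \<Longrightarrow> d * max (sqrt eps * sqrt (Lam lam i)) (eps * Lam lam i) \<le> tau i"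
    and m_large: "5 * L * sqnorm (\<lambda>i. th i - eta i) \<le> d^2 * real m"
begin

abbreviation "\<Phi> \<equiv> Phi lam th eta eps m"
abbreviation "\<sigma> \<equiv> post_var lam tau eps"
abbreviation "K \<equiv> conc_factor d L (sqnorm (\<lambda>i. th i - eta i))"

lemma
  assumes "i < m"
  shows tau_ge_sqrt: "d * (sqrt eps * sqrt (Lam lam i)) \<le> tau i"
    and tau_ge_lin: "d * (eps * Lam lam i) \<le> tau i"
proof -
  have "d * (sqrt eps * sqrt (Lam lam i)) \<le> d * max (sqrt eps * sqrt (Lam lam i)) (eps * Lam lam i)"
    and "d * (eps * Lam lam i) \<le> d * max (sqrt eps * sqrt (Lam lam i)) (eps * Lam lam i)"
    using d_pos by (intro mult_left_mono; simp)+
  then show "d * (sqrt eps * sqrt (Lam lam i)) \<le> tau i" "d * (eps * Lam lam i) \<le> tau i"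
    using tau_ge[OF assms] by linarith+
qed

lemma rate_pos: "0 < \<Phi>"
  by (rule Phi_pos[OF eps_pos lam_nz m_ge_1])

lemma bias_le_rate: "bias th eta m \<le> \<Phi>"
  by (simp add: Phi_def)

lemma post_var_pos': "0 < \<sigma> i"
  by (rule post_var_pos[OF eps_pos lam_nz tau_pos])

lemma sum_post_var_le_rate: "(\<Sum>i<m. \<sigma> i) \<le> \<Phi>"
proof -
  have "(\<Sum>i<m. \<sigma> i) \<le> (\<Sum>i<m. eps * Lam lam i)"
    by (intro sum_mono post_var_le[OF eps_pos lam_nz tau_pos])
  then show ?thesis by (simp add: Phi_def mult_LamBar_eq)
qed

lemma eps_Lam_le: "i < m \<Longrightarrow> eps * Lam lam i \<le> L * \<Phi> / real m"
proof -
  assume "i < m"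
  then have "eps * Lam lam i \<le> eps * LamMax lam m"
    unfolding LamMax_def using eps_pos by (intro mult_left_mono Max_ge) auto
  also have "\<dots> \<le> L * \<Phi> / real m"
    using LamMax_le m_ge_1 by (simp add: field_simps)
  finally show ?thesis .
qed

lemma post_var_le_max: "i < m \<Longrightarrow> \<sigma> i \<le> L * \<Phi> / real m"
  using post_var_le[OF eps_pos lam_nz tau_pos] eps_Lam_le by (meson order.trans)

lemma sum_post_var_sq_le: "(\<Sum>i<m. (\<sigma> i)^2) \<le> L * \<Phi>^2 / real m"
proof -
  have "(\<sigma> i)^2 \<le> L * \<Phi> / real m * \<sigma> i" if "i < m" for i
    using mult_right_mono[OF post_var_le_max[OF that] less_imp_le[OF post_var_pos']]
    by (simp add: power2_eq_square)
  then have "(\<Sum>i<m. (\<sigma> i)^2) \<le> (\<Sum>i<m. L * \<Phi> / real m * \<sigma> i)"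
    by (intro sum_mono) auto
  also have "\<dots> = L * \<Phi> / real m * (\<Sum>i<m. \<sigma> i)"
    by (rule sum_distrib_left[symmetric])
  also have "\<dots> \<le> L * \<Phi> / real m * \<Phi>"
    using sum_post_var_le_rate L_ge_1 rate_pos by (intro mult_left_mono) auto
  finally show ?thesis by (simp add: power2_eq_square)
qed

lemma K_ge: "10 * (1 + 1 / d) \<le> K"
proof -
  have "10 * (1 + 1 / d) * 1 \<le> 10 * max (1 + 1 / d) (sqnorm (\<lambda>i. th i - eta i) / d^2) * L"
    using L_ge_1 d_pos by (intro mult_mono) (auto simp: le_max_iff_disj)
  then show ?thesis by (simp add: conc_factor_def)
qed

lemma K_ge_10: "10 \<le> K"
  using K_ge d_pos by (smt (verit) divide_pos_pos)

lemma sum_post_var_ge: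
  assumes small_bias: "bias th eta m < \<Phi> / K"
  shows "\<Phi> / (1 + 1 / d) \<le> (\<Sum>i<m. \<sigma> i)"
proof -
  \<comment> \<open>a small bias forces the variance term to be the maximum in \<open>\<Phi>\<close>\<close>
  have "\<Phi> / K < \<Phi>" using rate_pos K_ge_10 by (simp add: divide_less_eq)
  then have "\<Phi> = (\<Sum>i<m. eps * Lam lam i)"
    using small_bias by (auto simp: Phi_def mult_LamBar_eq max_def split: if_splits)
  then have "\<Phi> / (1 + 1 / d) = (\<Sum>i<m. eps * Lam lam i / (1 + 1 / d))"
    by (simp add: sum_divide_distrib)
  also have "\<dots> \<le> (\<Sum>i<m. \<sigma> i)"
    using tau_ge_lin by (intro sum_mono post_var_ge[OF eps_pos lam_nz tau_pos d_pos]) auto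
  finally show ?thesis .
qed

definition prior_pull :: "nat \<Rightarrow> real" where
  "prior_pull i = \<sigma> i * (eta i - th i) / tau i"

definition noise_gain :: "nat \<Rightarrow> real" where
  "noise_gain i = \<sigma> i * lam i / eps"

definition post_err :: "(nat \<Rightarrow> real) \<Rightarrow> nat \<Rightarrow> real" where
  "post_err Y i = post_mean lam tau eta eps Y i - th i"

lemma post_err_eq: "post_err Y i = prior_pull i + noise_gain i * (Y i - lam i * th i)"
  unfolding post_err_def prior_pull_def noise_gain_def
  using post_mean_minus[OF eps_pos lam_nz tau_pos] by simp

lemma sum_prior_pull_sq_le: "(\<Sum>i<m. (prior_pull i)^2) \<le> \<Phi> / 5"
proof -
  let ?c = "L * \<Phi> / (real m * d^2)"
  have "(prior_pull i)^2 \<le> ?c * (th i - eta i)^2" if i: "i < m" for i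
  proof -
    have "(prior_pull i)^2 = (\<sigma> i / tau i)^2 * (th i - eta i)^2"
      by (simp add: prior_pull_def power_mult_distrib power_divide power2_commute)
    also have "\<dots> \<le> (eps * Lam lam i / d^2) * (th i - eta i)^2"
      using tau_ge_sqrt[OF i] d_pos
      by (intro mult_right_mono post_var_div_tau_sq_le[OF eps_pos lam_nz tau_pos d_pos]) auto
    also have "\<dots> \<le> ?c * (th i - eta i)^2"
      using eps_Lam_le[OF i] d_pos by (intro mult_right_mono) (auto simp: field_simps)
    finally show ?thesis .
  qed
  then have "(\<Sum>i<m. (prior_pull i)^2) \<le> (\<Sum>i<m. ?c * (th i - eta i)^2)"
    by (intro sum_mono) auto
  also have "\<dots> = ?c * (\<Sum>i<m. (th i - eta i)^2)"
    by (rule sum_distrib_left[symmetric])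
  also have "\<dots> \<le> ?c * sqnorm (\<lambda>i. th i - eta i)"
    unfolding sqnorm_def using th_eta_l2 rate_pos L_ge_1 d_pos
    by (intro mult_left_mono sum_le_suminf) auto
  also have "\<dots> = \<Phi> * (5 * L * sqnorm (\<lambda>i. th i - eta i)) / (5 * (real m * d^2))"
    by simp
  also have "\<dots> \<le> \<Phi> / 5"
    using m_large rate_pos m_ge_1 d_pos by (simp add: field_simps mult_left_mono)
  finally show ?thesis .
qed


abbreviation "noise \<equiv> posterior_noise lam tau eps m"
abbreviation "data \<equiv> data_law lam th eps"

lemma prob_space_noise: "prob_space noise"
  unfolding posterior_noise_def using post_var_pos'
  by (intro prob_space_PiM) (simp add: prob_space_normal_density prob_space_return)

lemma prob_space_data: "prob_space data"
  unfolding data_law_def using eps_pos by (intro prob_space_PiM prob_space_normal_density) auto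

lemma space_noise: "space noise = UNIV"
proof -
  have "space (if i < m then density lborel (normal_density 0 (sqrt (\<sigma> i))) else return borel 0) = UNIV"
    for i :: nat
    by simp
  then show ?thesis by (simp add: posterior_noise_def space_PiM)
qed

lemma space_data: "space data = UNIV"
  by (simp add: data_law_def space_PiM)

lemma noise_component_measurable[measurable]: "(\<lambda>z. z i) \<in> borel_measurable noise"
proof -
  let ?F = "\<lambda>i. if i < m then density lborel (normal_density 0 (sqrt (\<sigma> i))) else return borel (0::real)"
  have sets_F: "sets (?F i) = sets borel" for i by simp
  show ?thesis unfolding posterior_noise_def
    using measurable_component_singleton[of i UNIV ?F] measurable_cong_sets[OF refl sets_F] by blast
qed

lemma data_component_measurable[measurable]: "(\<lambda>Y. Y i) \<in> borel_measurable data"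
proof -
  let ?F = "\<lambda>i. density lborel (normal_density (lam i * th i) (sqrt eps))"
  have sets_F: "sets (?F i) = sets borel" for i by simp
  show ?thesis unfolding data_law_def
    using measurable_component_singleton[of i UNIV ?F] measurable_cong_sets[OF refl sets_F] by blast
qed


lemma prob_noise_sq_dev:
  assumes t: "0 < t"
  shows "measure noise {z \<in> space noise. t \<le> \<bar>(\<Sum>i<m. (z i + a i)^2) - (\<Sum>i<m. \<sigma> i + (a i)^2)\<bar>}
         \<le> (\<Sum>i<m. 2 * (\<sigma> i)^2 + 4 * \<sigma> i * (a i)^2) / t^2"
proof -
  have sqrt_sq: "(sqrt (\<sigma> i))^2 = \<sigma> i" for i
    using post_var_pos'[of i] by simp
  have sqrt_4: "(sqrt (\<sigma> i))^4 = (\<sigma> i)^2" for i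
    using power_mult[of "sqrt (\<sigma> i)" 2 2] by (simp add: sqrt_sq)
  have "measure noise {z \<in> space noise.
          t \<le> \<bar>(\<Sum>i<m. 1 * (z i - - a i)^2) - (\<Sum>i<m. 1 * ((sqrt (\<sigma> i))^2 + (0 - - a i)^2))\<bar>}
      \<le> (\<Sum>i<m. 1^2 * (2 * (sqrt (\<sigma> i))^4 + 4 * (sqrt (\<sigma> i))^2 * (0 - - a i)^2)) / t^2"
    unfolding posterior_noise_def using post_var_pos' t
    by (intro Chebyshev_PiM_sum_sq) (auto intro: prob_space_normal_density prob_space_return)
  then show ?thesis by (simp add: sqrt_sq sqrt_4)
qed

lemma prob_data_sq_dev:
  assumes t: "0 < t"
  shows "measure data {Y \<in> space data.
           t \<le> \<bar>(\<Sum>i<m. w i * (Y i - lam i * th i)^2) - (\<Sum>i<m. w i * eps)\<bar>}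
         \<le> 2 * (\<Sum>i<m. (w i * eps)^2) / t^2"
proof -
  have sqrt_sq: "(sqrt eps)^2 = eps"
    using eps_pos by simp
  have sqrt_4: "(sqrt eps)^4 = eps^2"
    using power_mult[of "sqrt eps" 2 2] by (simp add: sqrt_sq)
  have "measure data {Y \<in> space data. t \<le> \<bar>(\<Sum>i<m. w i * (Y i - lam i * th i)^2)
          - (\<Sum>i<m. w i * ((sqrt eps)^2 + (lam i * th i - lam i * th i)^2))\<bar>}
      \<le> (\<Sum>i<m. (w i)^2 * (2 * (sqrt eps)^4 + 4 * (sqrt eps)^2 * (lam i * th i - lam i * th i)^2)) / t^2"
    unfolding data_law_def using eps_pos t
    by (intro Chebyshev_PiM_sum_sq) (auto intro: prob_space_normal_density)
  then show ?thesis
    by (simp add: sqrt_sq sqrt_4 sum_distrib_left power_mult_distrib mult_ac)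
qed

definition noise_dev_event :: "(nat \<Rightarrow> real) set" where
  "noise_dev_event = {z \<in> space noise. 2/5 * \<Phi> \<le> \<bar>(\<Sum>i<m. (z i)^2) - (\<Sum>i<m. \<sigma> i)\<bar>}"

definition data_dev_event :: "(nat \<Rightarrow> real) set" where
  "data_dev_event = {Y \<in> space data. 2/5 * \<Phi> \<le>
     \<bar>(\<Sum>i<m. (noise_gain i)^2 * (Y i - lam i * th i)^2) - (\<Sum>i<m. (noise_gain i)^2 * eps)\<bar>}"

definition post_spread :: "(nat \<Rightarrow> real) \<Rightarrow> real" where
  "post_spread Y = (\<Sum>i<m. \<sigma> i + (post_err Y i)^2)"

definition spread_dev_event :: "(nat \<Rightarrow> real) \<Rightarrow> (nat \<Rightarrow> real) set" where
  "spread_dev_event Y = {z \<in> space noise.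
     9/10 * post_spread Y \<le> \<bar>(\<Sum>i<m. (z i + post_err Y i)^2) - post_spread Y\<bar>}"

lemma post_spread_ge: "(\<Sum>i<m. \<sigma> i) \<le> post_spread Y"
  unfolding post_spread_def by (intro sum_mono) simp

lemma prob_noise_dev_event: "measure noise noise_dev_event \<le> 25/2 * L / real m"
proof -
  have "measure noise noise_dev_event \<le> (\<Sum>i<m. 2 * (\<sigma> i)^2) / (2/5 * \<Phi>)^2"
    using prob_noise_sq_dev[of "2/5 * \<Phi>" "\<lambda>_. 0"] rate_pos by (simp add: noise_dev_event_def)
  also have "\<dots> = 25/2 * (\<Sum>i<m. (\<sigma> i)^2) / \<Phi>^2"
    using rate_pos by (simp add: sum_distrib_left[symmetric] power2_eq_square field_simps)
  also have "\<dots> \<le> 25/2 * (L * \<Phi>^2 / real m) / \<Phi>^2"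
    using sum_post_var_sq_le by (intro divide_right_mono mult_left_mono) auto
  also have "\<dots> = 25/2 * L / real m" using rate_pos by simp
  finally show ?thesis .
qed

lemma prob_data_dev_event: "measure data data_dev_event \<le> 25/2 * L / real m"
proof -
  have "measure data data_dev_event \<le> 2 * (\<Sum>i<m. ((noise_gain i)^2 * eps)^2) / (2/5 * \<Phi>)^2"
    using prob_data_sq_dev[of "2/5 * \<Phi>"] rate_pos by (simp add: data_dev_event_def)
  also have "\<dots> \<le> 2 * (\<Sum>i<m. (\<sigma> i)^2) / (2/5 * \<Phi>)^2"
    using post_var_noise_le[OF eps_pos lam_nz tau_pos] eps_pos
    by (intro divide_right_mono mult_left_mono sum_mono power_mono) (auto simp: noise_gain_def)
  also have "\<dots> \<le> 2 * (L * \<Phi>^2 / real m) / (2/5 * \<Phi>)^2"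
    using sum_post_var_sq_le by (intro divide_right_mono mult_left_mono) auto
  also have "\<dots> = 25/2 * L / real m"
    using rate_pos m_ge_1 by (simp add: power2_eq_square field_simps)
  finally show ?thesis .
qed

lemma prob_spread_dev_event:
  assumes small_bias: "bias th eta m < \<Phi> / K"
  shows "measure noise (spread_dev_event Y) \<le> 5 * (1 + 1 / d) * L / real m"
proof -
  define s where "s = L * \<Phi> / real m"
  let ?T = "post_spread Y"
  have T_ge: "\<Phi> / (1 + 1 / d) \<le> ?T"
    using sum_post_var_ge[OF small_bias] post_spread_ge[of Y] by linarith
  have T_pos: "0 < ?T"
    using T_ge rate_pos d_pos by (smt (verit) divide_pos_pos)
  have "(\<Sum>i<m. 2 * (\<sigma> i)^2 + 4 * \<sigma> i * (post_err Y i)^2) \<le> (\<Sum>i<m. 4 * s * (\<sigma> i + (post_err Y i)^2))"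
  proof (intro sum_mono)
    fix i assume "i \<in> {..<m}"
    then have \<sigma>_le: "\<sigma> i \<le> s" by (simp add: s_def post_var_le_max)
    have "2 * (\<sigma> i)^2 \<le> 4 * s * \<sigma> i"
      using \<sigma>_le post_var_pos'[of i] by (simp add: power2_eq_square mult_right_mono)
    moreover have "4 * \<sigma> i * (post_err Y i)^2 \<le> 4 * s * (post_err Y i)^2"
      using \<sigma>_le by (intro mult_right_mono) auto
    ultimately show "2 * (\<sigma> i)^2 + 4 * \<sigma> i * (post_err Y i)^2 \<le> 4 * s * (\<sigma> i + (post_err Y i)^2)"
      by (simp add: algebra_simps)
  qed
  also have "\<dots> = 4 * s * ?T" by (simp add: post_spread_def sum_distrib_left)
  finally have var_le: "(\<Sum>i<m. 2 * (\<sigma> i)^2 + 4 * \<sigma> i * (post_err Y i)^2) \<le> 4 * s * ?T" .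
  have "measure noise (spread_dev_event Y)
      \<le> (\<Sum>i<m. 2 * (\<sigma> i)^2 + 4 * \<sigma> i * (post_err Y i)^2) / (9/10 * ?T)^2"
    using prob_noise_sq_dev[of "9/10 * ?T" "post_err Y"] T_pos
    by (simp only: spread_dev_event_def post_spread_def)
  also have "\<dots> \<le> 4 * s * ?T / (9/10 * ?T)^2"
    using var_le by (intro divide_right_mono) auto
  also have "\<dots> = 400/81 * s / ?T" using T_pos by (simp add: power2_eq_square)
  also have "\<dots> \<le> 400/81 * s / (\<Phi> / (1 + 1 / d))"
    using T_ge T_pos rate_pos L_ge_1 m_ge_1 d_pos by (intro divide_left_mono) (auto simp: s_def intro!: mult_pos_pos divide_pos_pos add_pos_pos)
  also have "\<dots> = 400/81 * (1 + 1 / d) * L / real m"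
    using rate_pos d_pos m_ge_1 by (simp add: s_def field_simps)
  also have "\<dots> \<le> 5 * (1 + 1 / d) * L / real m"
    using d_pos L_ge_1 by (intro divide_right_mono mult_right_mono) auto
  finally show ?thesis .
qed


definition conc_event :: "(nat \<Rightarrow> real) \<Rightarrow> (nat \<Rightarrow> real) set" where
  "conc_event Y = {z \<in> space noise.
     \<Phi> / K \<le> sqnorm (\<lambda>i. z i + posterior_center lam tau eta eps m Y i - th i) \<and>
     sqnorm (\<lambda>i. z i + posterior_center lam tau eta eps m Y i - th i) \<le> K * \<Phi>}"

lemma AE_noise_tail: "AE z in noise. \<forall>i. m \<le> i \<longrightarrow> z i = 0"
proof (subst AE_all_countable, intro allI)
  fix i :: nat
  show "AE z in noise. m \<le> i \<longrightarrow> z i = 0"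
  proof (cases "m \<le> i")
    case True
    have "AE z in noise. z i = 0"
      unfolding posterior_noise_def
    proof (rule AE_PiM_component)
      show "prob_space (if j < m then density lborel (normal_density 0 (sqrt (\<sigma> j))) else return borel 0)"
        for j
        using post_var_pos'[of j] by (simp add: prob_space_normal_density prob_space_return)
      show "AE x in (if i < m then density lborel (normal_density 0 (sqrt (\<sigma> i))) else return borel 0).
              x = 0"
        using True by (simp add: AE_return)
    qed simp
    then show ?thesis by simp
  qed simp
qed

lemma sqnorm_posterior_sample:
  assumes tail: "\<forall>i. m \<le> i \<longrightarrow> z i = 0"
  shows "sqnorm (\<lambda>i. z i + posterior_center lam tau eta eps m Y i - th i)
       = (\<Sum>i<m. (z i + post_err Y i)^2) + bias th eta m"
proof -
  have "sqnorm (\<lambda>i. z i + posterior_center lam tau eta eps m Y i - th i)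
      = (\<Sum>i<m. (z i + posterior_center lam tau eta eps m Y i - th i)^2) + bias th eta m"
    by (rule sqnorm_split[OF th_eta_l2]) (use tail in \<open>simp add: posterior_center_def\<close>)
  also have "(\<Sum>i<m. (z i + posterior_center lam tau eta eps m Y i - th i)^2)
      = (\<Sum>i<m. (z i + post_err Y i)^2)"
    by (intro sum.cong) (auto simp: posterior_center_def post_err_def algebra_simps)
  finally show ?thesis .
qed

lemma sample_sq_err_le:
  assumes z: "z \<notin> noise_dev_event" and Y: "Y \<notin> data_dev_event"
  shows "(\<Sum>i<m. (z i + post_err Y i)^2) + bias th eta m \<le> K * \<Phi>"
proof -
  let ?u = "\<lambda>i. noise_gain i * (Y i - lam i * th i)"
  have "\<bar>(\<Sum>i<m. (z i)^2) - (\<Sum>i<m. \<sigma> i)\<bar> < 2/5 * \<Phi>"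
    using z by (auto simp: noise_dev_event_def space_noise)
  then have z_sq: "(\<Sum>i<m. (z i)^2) < 7/5 * \<Phi>"
    using sum_post_var_le_rate by linarith
  have "(\<Sum>i<m. (noise_gain i)^2 * eps) \<le> (\<Sum>i<m. \<sigma> i)"
    using post_var_noise_le[OF eps_pos lam_nz tau_pos] by (intro sum_mono) (simp add: noise_gain_def)
  moreover have "\<bar>(\<Sum>i<m. (?u i)^2) - (\<Sum>i<m. (noise_gain i)^2 * eps)\<bar> < 2/5 * \<Phi>"
    using Y by (auto simp: data_dev_event_def space_data power_mult_distrib)
  ultimately have u_sq: "(\<Sum>i<m. (?u i)^2) < 7/5 * \<Phi>"
    using sum_post_var_le_rate by linarith
  have "(\<Sum>i<m. (z i + post_err Y i)^2) \<le> (\<Sum>i<m. 3 * ((z i)^2 + (prior_pull i)^2 + (?u i)^2))"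
    using power2_sum3_le by (intro sum_mono) (simp add: post_err_eq add.assoc)
  also have "\<dots> = 3 * (\<Sum>i<m. (z i)^2) + 3 * (\<Sum>i<m. (prior_pull i)^2) + 3 * (\<Sum>i<m. (?u i)^2)"
    by (simp add: sum.distrib sum_distrib_left)
  also have "\<dots> \<le> 9 * \<Phi>"
    using z_sq u_sq sum_prior_pull_sq_le by linarith
  finally have "(\<Sum>i<m. (z i + post_err Y i)^2) + bias th eta m \<le> 10 * \<Phi>"
    using bias_le_rate by linarith
  also have "\<dots> \<le> K * \<Phi>"
    using K_ge_10 rate_pos by (intro mult_right_mono) auto
  finally show ?thesis .
qed

lemma sample_sq_err_ge:
  assumes "bias th eta m < \<Phi> / K \<Longrightarrow> z \<notin> spread_dev_event Y"
  shows "\<Phi> / K \<le> (\<Sum>i<m. (z i + post_err Y i)^2) + bias th eta m"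
proof (cases "bias th eta m < \<Phi> / K")
  case False
  then show ?thesis
    using sum_nonneg[of "{..<m}" "\<lambda>i. (z i + post_err Y i)^2"] by simp
next
  case True
  have "\<bar>(\<Sum>i<m. (z i + post_err Y i)^2) - post_spread Y\<bar> < 9/10 * post_spread Y"
    using assms[OF True] by (auto simp: spread_dev_event_def space_noise)
  then have "post_spread Y / 10 < (\<Sum>i<m. (z i + post_err Y i)^2)" by linarith
  moreover have "\<Phi> / K \<le> post_spread Y / 10"
  proof -
    have "\<Phi> / K \<le> \<Phi> / (10 * (1 + 1 / d))"
      using K_ge K_ge_10 rate_pos d_pos by (intro divide_left_mono) (auto intro!: mult_pos_pos add_pos_pos)
    also have "\<dots> = \<Phi> / (1 + 1 / d) / 10" by simp
    also have "\<dots> \<le> post_spread Y / 10"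
      using sum_post_var_ge[OF True] post_spread_ge[of Y] by (intro divide_right_mono) auto
    finally show ?thesis .
  qed
  ultimately show ?thesis
    using bias_nonneg[OF th_eta_l2, of m] by linarith
qed

lemma prob_conc_event_ge:
  assumes Y: "Y \<notin> data_dev_event"
  shows "1 - 25/2 * L / real m - 5 * (1 + 1 / d) * L / real m \<le> measure noise (conc_event Y)"
proof -
  interpret noise: prob_space noise by (rule prob_space_noise)
  \<comment> \<open>the spread event only matters when the bias alone cannot certify the lower bound\<close>
  define B where "B = (if bias th eta m < \<Phi> / K then spread_dev_event Y else {})"
  have B_le: "measure noise B \<le> 5 * (1 + 1 / d) * L / real m"
    using prob_spread_dev_event[of Y] d_pos L_ge_1 by (auto simp: B_def intro!: add_pos_pos)
  have "spread_dev_event Y \<in> noise.events"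
    unfolding spread_dev_event_def by measurable
  then have B_events: "B \<in> noise.events" by (simp add: B_def)
  have "1 - measure noise noise_dev_event - measure noise B \<le> measure noise (conc_event Y)"
  proof (rule noise.prob_ge_one_minus_two_events[OF _ _ B_events])
    show "conc_event Y \<in> noise.events"
      unfolding conc_event_def sqnorm_def by measurable
    show "noise_dev_event \<in> noise.events"
      unfolding noise_dev_event_def by measurable
    show "AE z in noise. z \<notin> noise_dev_event \<longrightarrow> z \<notin> B \<longrightarrow> z \<in> conc_event Y"
      using AE_noise_tail
    proof eventually_elim
      case (elim z)
      then show ?case
        using sample_sq_err_le[OF _ Y, of z] sample_sq_err_ge[of z Y]
        by (auto simp: conc_event_def space_noise B_def sqnorm_posterior_sample)
    qed
  qed
  then show ?thesis using prob_noise_dev_event B_le by linarith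
qed


lemma measure_posterior_conc:
  "measure (posterior lam tau eta eps m Y) {v \<in> space (posterior lam tau eta eps m Y).
     \<Phi> / K \<le> sqnorm (\<lambda>i. v i - th i) \<and> sqnorm (\<lambda>i. v i - th i) \<le> K * \<Phi>}
   = measure noise (conc_event Y)"
proof -
  let ?shift = "\<lambda>z i. z i + posterior_center lam tau eta eps m Y i"
  let ?A = "{v \<in> space (PiM UNIV (\<lambda>_. borel)).
              \<Phi> / K \<le> sqnorm (\<lambda>i. v i - th i) \<and> sqnorm (\<lambda>i. v i - th i) \<le> K * \<Phi>}"
  have shift: "?shift \<in> measurable noise (PiM UNIV (\<lambda>_. borel))"
    by (rule measurable_PiM_single') (auto simp: space_noise)
  have A: "?A \<in> sets (PiM UNIV (\<lambda>_. borel))"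
    unfolding sqnorm_def by measurable
  have "measure (posterior lam tau eta eps m Y) {v \<in> space (posterior lam tau eta eps m Y).
      \<Phi> / K \<le> sqnorm (\<lambda>i. v i - th i) \<and> sqnorm (\<lambda>i. v i - th i) \<le> K * \<Phi>}
      = measure (distr noise (PiM UNIV (\<lambda>_. borel)) ?shift) ?A"
    by (simp add: posterior_eq_distr_noise[OF eps_pos lam_nz tau_pos])
  also have "\<dots> = measure noise (?shift -` ?A \<inter> space noise)"
    by (rule measure_distr[OF shift A])
  also have "?shift -` ?A \<inter> space noise = conc_event Y"
    by (auto simp: conc_event_def space_noise space_PiM)
  finally show ?thesis .
qed

lemma measurable_prob_conc_event: "(\<lambda>Y. measure noise (conc_event Y)) \<in> borel_measurable data"
proof -
  interpret noise: prob_space noise by (rule prob_space_noise)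
  define Q where "Q = {p \<in> space (data \<Otimes>\<^sub>M noise).
    \<Phi> / K \<le> sqnorm (\<lambda>i. snd p i + posterior_center lam tau eta eps m (fst p) i - th i) \<and>
    sqnorm (\<lambda>i. snd p i + posterior_center lam tau eta eps m (fst p) i - th i) \<le> K * \<Phi>}"
  have "Q \<in> sets (data \<Otimes>\<^sub>M noise)"
    unfolding Q_def sqnorm_def posterior_center_def post_mean_def by measurable
  then have "(\<lambda>Y. emeasure noise (Pair Y -` Q)) \<in> borel_measurable data"
    by (rule noise.measurable_emeasure_Pair)
  moreover have "Pair Y -` Q = conc_event Y" for Y
    by (auto simp: Q_def conc_event_def space_pair_measure space_noise space_data)
  ultimately show ?thesis
    unfolding measure_def by (simp add: borel_measurable_enn2real)
qed

theorem post_conc_prob_bounds: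
  "1 - (25 * L + 5 * (1 + 1 / d) * L) / real m \<le> post_conc_prob lam th eta tau eps m (\<Phi> / K) (K * \<Phi>)
   \<and> post_conc_prob lam th eta tau eps m (\<Phi> / K) (K * \<Phi>) \<le> 1"
proof -
  interpret data: prob_space data by (rule prob_space_data)
  let ?f = "\<lambda>Y. measure noise (conc_event Y)"
  have f_01: "0 \<le> ?f Y \<and> ?f Y \<le> 1" for Y
    using prob_space.prob_le_1[OF prob_space_noise] by simp
  have conc_prob: "post_conc_prob lam th eta tau eps m (\<Phi> / K) (K * \<Phi>) = data.expectation ?f"
    unfolding post_conc_prob_def measure_posterior_conc ..
  have "0 \<le> 25/2 * L / real m" "0 \<le> 5 * (1 + 1 / d) * L / real m"
    using d_pos L_ge_1 by auto
  then have c_le: "1 - 25/2 * L / real m - 5 * (1 + 1 / d) * L / real m \<le> 1" by linarith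
  have "data_dev_event \<in> data.events"
    unfolding data_dev_event_def by measurable
  then have "(1 - 25/2 * L / real m - 5 * (1 + 1 / d) * L / real m) - measure data data_dev_event
      \<le> data.expectation ?f"
    using measurable_prob_conc_event f_01 prob_conc_event_ge c_le
    by (intro data.expectation_ge_off_event) auto
  moreover have "data.expectation ?f \<le> 1"
    using measurable_prob_conc_event f_01
    by (intro data.integral_le_const) (auto intro: data.integrable_const_bound[where B=1])
  moreover have "1 - (25 * L + 5 * (1 + 1 / d) * L) / real m
      = (1 - 25/2 * L / real m - 5 * (1 + 1 / d) * L / real m) - 25/2 * L / real m"
    by (simp add: add_divide_distrib diff_divide_distrib)
  ultimately show ?thesis
    using prob_data_dev_event unfolding conc_prob by linarith
qed

end

section \<open>Vanishing noise\<close>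

lemma sieve_fixed_noise_oracle_dim:
  fixes tau :: "nat \<Rightarrow> real"
  assumes eps: "0 < eps" and lam_nz: "\<And>i. lam i \<noteq> 0" and lam_bdd: "\<exists>B. \<forall>i. \<bar>lam i\<bar> \<le> B"
    and th_eta_l2: "summable (\<lambda>i. (th i - eta i)^2)" and tau_pos: "\<And>i. 0 < tau i"
    and d_pos: "0 < d" and L_ge_1: "1 \<le> L"
    and assmA: "\<And>i. i < G_eps lam eps \<Longrightarrow> d * max (sqrt eps * sqrt (Lam lam i)) (eps * Lam lam i) \<le> tau i"
    and L_bound: "eps * real (oracle_dim lam th eta eps) * LamMax lam (oracle_dim lam th eta eps)
                    / oracle_rate lam th eta eps \<le> L"
    and rate_small: "oracle_rate lam th eta eps < Lam lam 0 / L"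
    and dim_large: "5 * L * sqnorm (\<lambda>i. th i - eta i) / d^2 \<le> real (oracle_dim lam th eta eps)"
  shows "sieve_fixed_noise lam th eta tau eps d L (oracle_dim lam th eta eps)"
proof -
  let ?m = "oracle_dim lam th eta eps"
  have m: "1 \<le> ?m" using oracle_dim_minimal[OF eps lam_nz lam_bdd] by blast
  have "eps * real ?m * LamMax lam ?m \<le> L * oracle_rate lam th eta eps"
    using L_bound pos_divide_le_eq[OF oracle_rate_pos[OF eps lam_nz lam_bdd]] by blast
  then have LamMax_le: "eps * real ?m * LamMax lam ?m \<le> L * Phi lam th eta eps ?m"
    by (simp only: oracle_rate_def)
  have "L * oracle_rate lam th eta eps \<le> Lam lam 0"
    using rate_small L_ge_1 by (simp add: pos_less_divide_eq mult.commute)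
  then have "?m \<le> G_eps lam eps"
    using LamMax_le by (intro le_G_eps[OF m eps lam_nz]) (simp add: oracle_rate_def)
  then have "i < ?m \<Longrightarrow> d * max (sqrt eps * sqrt (Lam lam i)) (eps * Lam lam i) \<le> tau i" for i
    using assmA by simp
  moreover have "5 * L * sqnorm (\<lambda>i. th i - eta i) \<le> d^2 * real ?m"
    using dim_large d_pos by (simp add: pos_divide_le_eq mult.commute)
  ultimately show ?thesis
    using eps lam_nz tau_pos d_pos L_ge_1 m th_eta_l2 LamMax_le by unfold_locales
qed

theorem mainTheorem7:
  fixes lam th eta :: "nat \<Rightarrow> real"
    and tau :: "real \<Rightarrow> nat \<Rightarrow> real"
    and d L :: real
  assumes lam_bdd: "\<exists>B. \<forall>i. \<bar>lam i\<bar> \<le> B"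
    and lam_nz: "\<And>i. lam i \<noteq> 0"
    and th_l2: "summable (\<lambda>i. (th i)\<^sup>2)"
    and th_eta_l2: "summable (\<lambda>i. (th i - eta i)\<^sup>2)"
    and tau_pos: "\<And>eps i. 0 < eps \<Longrightarrow> eps < 1 \<Longrightarrow> 0 < tau eps i"
    and d_pos: "0 < d"
    and assmA: "\<And>eps i. 0 < eps \<Longrightarrow> eps < 1 \<Longrightarrow> i < G_eps lam eps \<Longrightarrow>
                  d * max (sqrt eps * sqrt (Lam lam i)) (eps * Lam lam i) \<le> tau eps i"
    and L_ge1: "1 \<le> L"
    and L_bound: "\<And>eps. 0 < eps \<Longrightarrow> eps < 1 \<Longrightarrow>
                  eps * real (oracle_dim lam th eta eps) * LamMax lam (oracle_dim lam th eta eps)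
                    / oracle_rate lam th eta eps \<le> L"
    and m_to_inf: "filterlim (\<lambda>eps. oracle_dim lam th eta eps) at_top (at_right 0)"
  shows "let K = 10 * max (1 + 1 / d) (sqnorm (\<lambda>i. th i - eta i) / d\<^sup>2) * L in
         ((\<lambda>eps. post_conc_prob lam th eta (tau eps) eps (oracle_dim lam th eta eps)
                    (oracle_rate lam th eta eps / K) (K * oracle_rate lam th eta eps))
           \<longlongrightarrow> 1) (at_right 0)"
proof -
  let ?m = "\<lambda>eps. real (oracle_dim lam th eta eps)"
  let ?K = "conc_factor d L (sqnorm (\<lambda>i. th i - eta i))"
  define P where "P eps = post_conc_prob lam th eta (tau eps) eps (oracle_dim lam th eta eps)
    (oracle_rate lam th eta eps / ?K) (?K * oracle_rate lam th eta eps)" for eps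
  define R where "R = 25 * L + 5 * (1 + 1 / d) * L"
  have m_real: "filterlim ?m at_top (at_right 0)"
    using filterlim_compose[OF filterlim_real_sequentially m_to_inf] by (simp add: o_def)
  have "eventually (\<lambda>eps. 0 < eps \<and> eps < 1) (at_right (0::real))"
    unfolding eventually_at_right_field by (intro exI[of _ 1]) auto
  moreover have "eventually (\<lambda>eps. oracle_rate lam th eta eps < Lam lam 0 / L) (at_right 0)"
    using Lam_pos[of lam 0, OF lam_nz] L_ge1
    by (intro order_tendstoD(2)[OF oracle_rate_tendsto_zero[OF lam_nz lam_bdd th_eta_l2]]) simp
  moreover have "eventually (\<lambda>eps. 5 * L * sqnorm (\<lambda>i. th i - eta i) / d^2 \<le> ?m eps) (at_right 0)"
    using m_real by (simp add: filterlim_at_top)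
  ultimately have bounds: "eventually (\<lambda>eps. 1 - R / ?m eps \<le> P eps \<and> P eps \<le> 1) (at_right 0)"
  proof eventually_elim
    case (elim eps)
    then have eps: "0 < eps" "eps < 1" by simp_all
    interpret sieve_fixed_noise lam th eta "tau eps" eps d L "oracle_dim lam th eta eps"
      using elim by (intro sieve_fixed_noise_oracle_dim[OF eps(1) lam_nz lam_bdd th_eta_l2
          tau_pos[OF eps] d_pos L_ge1 assmA[OF eps] L_bound[OF eps]]) simp_all
    show ?case using post_conc_prob_bounds by (simp add: P_def R_def oracle_rate_def)
  qed
  have "((\<lambda>eps. 1 - R / ?m eps) \<longlongrightarrow> 1 - 0) (at_right 0)"
    by (intro tendsto_diff tendsto_const tendsto_divide_0[OF tendsto_const]
        filterlim_at_top_imp_at_infinity m_real)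
  moreover have "eventually (\<lambda>eps. 1 - R / ?m eps \<le> P eps) (at_right 0)"
    and "eventually (\<lambda>eps. P eps \<le> 1) (at_right 0)"
    using bounds by (simp_all add: eventually_conj_iff)
  ultimately have "(P \<longlongrightarrow> 1) (at_right 0)"
    using tendsto_sandwich[OF _ _ _ tendsto_const] by simp
  then show ?thesis
    by (simp add: Let_def P_def[abs_def] conc_factor_def)
qed

end
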